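(* Let $G$ be a graph on $n$ vertices ($n$ even and sufficiently large) in which every vertex has at least $n-\sqrt{n}/4000$ neighbors. If a perfect matching of $G$ is chosen uniformly at random, then for any edge $e$ the probability that $e$ is contained in the matching is at most $\frac{1}{n-\sqrt{n}/1000}$. *)

theory Defs
  imports Complex_Main
begin

definition simple_graph :: "'a set \<Rightarrow> 'a set set \<Rightarrow> bool" where
  "simple_graph V E \<longleftrightarrow> finite V \<and>
     (\<forall>e\<in>E. \<exists>u v. u \<noteq> v \<and> u \<in> V \<and> v \<in> V \<and> e = {u, v})"

definition degree :: "'a set \<Rightarrow> 'a set set \<Rightarrow> 'a \<Rightarrow> nat" where
  "degree V E v = card {u \<in> V. {u, v} \<in> E}"

definition perfect_matching :: "'a set \<Rightarrow> 'a set set \<Rightarrow> 'a set set \<Rightarrow> bool" where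
  "perfect_matching V E M \<longleftrightarrow> M \<subseteq> E \<and> (\<forall>v\<in>V. \<exists>!e. e \<in> M \<and> v \<in> e)"

definition perfect_matchings :: "'a set \<Rightarrow> 'a set set \<Rightarrow> 'a set set set" where
  "perfect_matchings V E = {M. perfect_matching V E M}"

definition prob_edge_in_pm :: "'a set \<Rightarrow> 'a set set \<Rightarrow> 'a set \<Rightarrow> real" where
  "prob_edge_in_pm V E e =
     real (card {M \<in> perfect_matchings V E. e \<in> M}) / real (card (perfect_matchings V E))"

end

theory Submission
  imports Defs
begin

(* A switching argument. Let M be a perfect matching containing the edge ab and let xy be another
   edge of M with ax, by \<in> E. Replacing ab, xy by ax, by yields a perfect matching avoiding ab, and
   M and (x, y) can be recovered from it, since x and y are the partners of a and b there. Of the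
   n - 2 orientations (x, y) of the edges of M - {ab}, at most n - 1 - deg a fail because x is not
   adjacent to a and at most n - 1 - deg b because y is not adjacent to b; hence
   #PM \<ge> #PM(ab) (deg a + deg b + 1 - n). Under the degree hypothesis the last factor is at least
   n - sqrt n / 1000 for every n. *)

lemma simple_graph_edgeD:
  assumes "simple_graph V E" and "{x, y} \<in> E"
  shows "x \<noteq> y" and "x \<in> V" and "y \<in> V"
  using assms by (auto simp: simple_graph_def doubleton_eq_iff)

lemma simple_graph_edge_subset:
  "simple_graph V E \<Longrightarrow> g \<in> E \<Longrightarrow> g \<subseteq> V"
  by (auto simp: simple_graph_def)

lemma finite_perfect_matchings:
  assumes "simple_graph V E"
  shows "finite (perfect_matchings V E)"
proof -
  have "E \<subseteq> Pow V"
    using simple_graph_edge_subset[OF assms] by blast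
  then have "finite E"
    using assms by (simp add: simple_graph_def finite_subset)
  moreover have "perfect_matchings V E \<subseteq> Pow E"
    by (auto simp: perfect_matchings_def perfect_matching_def)
  ultimately show ?thesis
    by (meson finite_Pow_iff finite_subset)
qed

lemma perfect_matching_iff_disjoint_cover:
  assumes G: "simple_graph V E"
  shows "perfect_matching V E M \<longleftrightarrow> M \<subseteq> E \<and> V \<subseteq> \<Union>M \<and> pairwise disjnt M"
proof
  assume pm: "perfect_matching V E M"
  then have ME: "M \<subseteq> E" and unique: "\<And>v. v \<in> V \<Longrightarrow> \<exists>!g. g \<in> M \<and> v \<in> g"
    by (auto simp: perfect_matching_def)
  have "disjnt g h" if "g \<in> M" "h \<in> M" "g \<noteq> h" for g h
  proof (rule ccontr)
    assume "\<not> disjnt g h"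
    then obtain v where v: "v \<in> g" "v \<in> h"
      by (auto simp: disjnt_def)
    then have "v \<in> V"
      using that(1) ME simple_graph_edge_subset[OF G] by blast
    then show False
      using unique v that by blast
  qed
  moreover have "V \<subseteq> \<Union>M"
    using unique by blast
  ultimately show "M \<subseteq> E \<and> V \<subseteq> \<Union>M \<and> pairwise disjnt M"
    using ME by (simp add: pairwise_def)
next
  assume "M \<subseteq> E \<and> V \<subseteq> \<Union>M \<and> pairwise disjnt M"
  then show "perfect_matching V E M"
    unfolding perfect_matching_def pairwise_def disjnt_def by blast
qed

lemma perfect_matching_partner_unique:
  assumes "simple_graph V E" and "perfect_matching V E M"
    and "{x, y} \<in> M" and "{x, y'} \<in> M"
  shows "y = y'"
proof -
  have "pairwise disjnt M"
    using assms(1,2) perfect_matching_iff_disjoint_cover by blast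
  moreover have "\<not> disjnt {x, y} {x, y'}"
    by (simp add: disjnt_def)
  ultimately have "{x, y} = {x, y'}"
    using assms(3,4) by (meson pairwiseD)
  then show ?thesis
    by (auto simp: doubleton_eq_iff)
qed

definition switch :: "'a \<Rightarrow> 'a \<Rightarrow> 'a set set \<Rightarrow> 'a \<times> 'a \<Rightarrow> 'a set set" where
  "switch a b M = (\<lambda>(x, y). insert {a, x} (insert {b, y} (M - {{a, b}, {x, y}})))"

lemma perfect_matching_switch:
  assumes G: "simple_graph V E" and pm: "perfect_matching V E M"
    and ab: "{a, b} \<in> M" and xy: "{x, y} \<in> M" and "{a, b} \<noteq> {x, y}"
    and "{a, x} \<in> E" and "{b, y} \<in> E"
  shows "perfect_matching V E (switch a b M (x, y))"
proof -
  have M: "M \<subseteq> E" "V \<subseteq> \<Union>M" "pairwise disjnt M"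
    using pm perfect_matching_iff_disjoint_cover[OF G] by blast+
  have "disjnt {a, b} {x, y}"
    using M(3) assms(3-5) by (meson pairwiseD)
  moreover have "a \<noteq> b" "x \<noteq> y"
    using ab xy M(1) simple_graph_edgeD[OF G] by blast+
  ultimately have new_disjoint: "disjnt {a, x} {b, y}"
    by (auto simp: disjnt_def)
  define R where "R = M - {{a, b}, {x, y}}"
  have old_disjoint: "disjnt {a, x} g \<and> disjnt {b, y} g" if "g \<in> R" for g
  proof -
    have g: "g \<in> M" "{a, b} \<noteq> g" "{x, y} \<noteq> g"
      using that by (auto simp: R_def)
    have "disjnt {a, b} g" "disjnt {x, y} g"
      using pairwiseD[OF M(3) ab g(1) g(2)] pairwiseD[OF M(3) xy g(1) g(3)] .
    then show ?thesis
      by (auto simp: disjnt_def)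
  qed
  have switch_R: "switch a b M (x, y) = insert {a, x} (insert {b, y} R)"
    by (simp add: switch_def R_def)
  have "\<Union>M \<subseteq> \<Union>(switch a b M (x, y))"
    unfolding switch_R R_def by blast
  moreover have "pairwise disjnt (switch a b M (x, y))"
  proof -
    have "pairwise disjnt R"
      using M(3) by (rule pairwise_subset) (auto simp: R_def)
    then have "pairwise disjnt (insert {b, y} R)"
      using old_disjoint by (auto simp: pairwise_insert intro: disjnt_sym)
    then show ?thesis
      unfolding switch_R using new_disjoint old_disjoint
      by (auto simp: pairwise_insert intro: disjnt_sym)
  qed
  moreover have "switch a b M (x, y) \<subseteq> E"
    using M(1) assms(6,7) by (auto simp: switch_R R_def)
  ultimately show ?thesis
    unfolding perfect_matching_iff_disjoint_cover[OF G] using M(2) by blast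
qed

lemma degree_plus_non_neighbours:
  assumes G: "simple_graph V E" and vw_E: "{v, w} \<in> E"
  shows "degree V E v + card {x \<in> V - {v, w}. {v, x} \<notin> E} + 1 = card V"
proof -
  have vw: "v \<noteq> w" "v \<in> V" "w \<in> V"
    using simple_graph_edgeD[OF assms] by blast+
  have fin: "finite V"
    using G by (simp add: simple_graph_def)
  define N where "N = {x \<in> V - {v, w}. {v, x} \<in> E}"
  define K where "K = {x \<in> V - {v, w}. {v, x} \<notin> E}"
  have fin_NK: "finite N" "finite K"
    using fin by (simp_all add: N_def K_def)
  have "{u \<in> V. {u, v} \<in> E} = insert w N"
  proof (intro equalityI subsetI)
    fix u assume "u \<in> {u \<in> V. {u, v} \<in> E}"
    then have "u \<in> V" "{v, u} \<in> E" "u \<noteq> v"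
      using simple_graph_edgeD[OF G] by (auto simp: insert_commute)
    then show "u \<in> insert w N"
      by (auto simp: N_def)
  next
    fix u assume "u \<in> insert w N"
    then show "u \<in> {u \<in> V. {u, v} \<in> E}"
      using vw vw_E by (auto simp: N_def insert_commute)
  qed
  then have "degree V E v = card N + 1"
    using fin_NK vw by (simp add: degree_def N_def)
  moreover have "V = {v, w} \<union> (N \<union> K)" "disjnt {v, w} (N \<union> K)" "disjnt N K"
    using vw by (auto simp: N_def K_def disjnt_def)
  then have "card V = card {v, w} + (card N + card K)"
    using fin_NK by (metis card_Un_disjnt finite.emptyI finite.insertI finite_UnI)
  ultimately show ?thesis
    using vw by (simp add: K_def)
qed

locale graph_with_edge =
  fixes V :: "'a set" and E :: "'a set set" and a b :: 'a
  assumes simple: "simple_graph V E" and ab_edge: "{a, b} \<in> E"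
begin

lemma a_neq_b: "a \<noteq> b" and a_in_V: "a \<in> V" and b_in_V: "b \<in> V"
  using simple_graph_edgeD[OF simple ab_edge] by simp_all

lemma finite_V: "finite V"
  using simple by (simp add: simple_graph_def)

lemma two_le_card_V: "2 \<le> card V"
  using card_mono[OF finite_V, of "{a, b}"] a_in_V b_in_V a_neq_b by simp

definition pms_with_edge :: "'a set set set" where
  "pms_with_edge = {M \<in> perfect_matchings V E. {a, b} \<in> M}"

definition arcs_off_edge :: "'a set set \<Rightarrow> ('a \<times> 'a) set" where
  "arcs_off_edge M = {(x, y). {x, y} \<in> M \<and> x \<notin> {a, b}}"

definition switchable_arcs :: "'a set set \<Rightarrow> ('a \<times> 'a) set" where
  "switchable_arcs M = {(x, y) \<in> arcs_off_edge M. {a, x} \<in> E \<and> {b, y} \<in> E}"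

definition non_neighbours :: "'a \<Rightarrow> 'a set" where
  "non_neighbours v = {x \<in> V - {a, b}. {v, x} \<notin> E}"

lemma pms_with_edgeD:
  assumes "M \<in> pms_with_edge"
  shows "perfect_matching V E M" and "{a, b} \<in> M"
  using assms by (auto simp: pms_with_edge_def perfect_matchings_def)

lemma arcs_off_edgeD:
  assumes M: "M \<in> pms_with_edge" and xy: "(x, y) \<in> arcs_off_edge M"
  shows "x \<in> V - {a, b}" and "y \<in> V - {a, b}" and "{x, y} \<in> M"
proof -
  have xy_M: "{x, y} \<in> M" and x: "x \<notin> {a, b}"
    using xy by (auto simp: arcs_off_edge_def)
  have "{x, y} \<in> E"
    using pms_with_edgeD(1)[OF M] xy_M by (auto simp: perfect_matching_def)
  then have "x \<in> V" "y \<in> V"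
    using simple_graph_edgeD[OF simple] by blast+
  moreover have "y \<noteq> a" "y \<noteq> b"
    using perfect_matching_partner_unique[OF simple pms_with_edgeD(1)[OF M]]
      pms_with_edgeD(2)[OF M] xy_M x by (metis insertCI insert_commute)+
  ultimately show "x \<in> V - {a, b}" "y \<in> V - {a, b}" "{x, y} \<in> M"
    using x xy_M by auto
qed

lemma inj_on_fst_arcs_off_edge: "M \<in> pms_with_edge \<Longrightarrow> inj_on fst (arcs_off_edge M)"
  using perfect_matching_partner_unique[OF simple pms_with_edgeD(1)]
  by (fastforce simp: inj_on_def arcs_off_edge_def)

lemma inj_on_snd_arcs_off_edge: "M \<in> pms_with_edge \<Longrightarrow> inj_on snd (arcs_off_edge M)"
  using perfect_matching_partner_unique[OF simple pms_with_edgeD(1)]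
  by (fastforce simp: inj_on_def arcs_off_edge_def insert_commute)

lemma finite_arcs_off_edge: "M \<in> pms_with_edge \<Longrightarrow> finite (arcs_off_edge M)"
proof -
  assume M: "M \<in> pms_with_edge"
  have "arcs_off_edge M \<subseteq> V \<times> V"
    using arcs_off_edgeD[OF M] by auto
  then show ?thesis
    using finite_V by (simp add: finite_subset)
qed

lemma card_arcs_off_edge:
  assumes M: "M \<in> pms_with_edge"
  shows "card (arcs_off_edge M) + 2 = card V"
proof -
  have "fst ` arcs_off_edge M = V - {a, b}"
  proof
    show "fst ` arcs_off_edge M \<subseteq> V - {a, b}"
      using arcs_off_edgeD(1)[OF M] by force
  next
    show "V - {a, b} \<subseteq> fst ` arcs_off_edge M"
    proof
      fix x assume x: "x \<in> V - {a, b}"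
      then obtain g where "g \<in> M" "x \<in> g"
        using pms_with_edgeD(1)[OF M] by (auto simp: perfect_matching_def)
      moreover have "g \<in> E"
        using \<open>g \<in> M\<close> pms_with_edgeD(1)[OF M] by (auto simp: perfect_matching_def)
      moreover obtain u v where "g = {u, v}"
        using \<open>g \<in> E\<close> simple by (auto simp: simple_graph_def)
      ultimately obtain y where "{x, y} \<in> M"
        by (metis insert_commute insertE singletonD)
      then show "x \<in> fst ` arcs_off_edge M"
        using x by (force simp: arcs_off_edge_def)
    qed
  qed
  then have "card (arcs_off_edge M) = card (V - {a, b})"
    by (metis card_image inj_on_fst_arcs_off_edge[OF M])
  then show ?thesis
    using finite_V a_in_V b_in_V a_neq_b two_le_card_V by (simp add: card_Diff_subset)
qed

lemma card_non_neighbours: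
  "card (non_neighbours a) + degree V E a + 1 = card V"
  "card (non_neighbours b) + degree V E b + 1 = card V"
proof -
  have "{b, a} \<in> E" "V - {b, a} = V - {a, b}"
    using ab_edge by (simp_all add: insert_commute)
  then show "card (non_neighbours a) + degree V E a + 1 = card V"
    "card (non_neighbours b) + degree V E b + 1 = card V"
    using degree_plus_non_neighbours[OF simple ab_edge]
      degree_plus_non_neighbours[OF simple, of b a]
    by (simp_all add: non_neighbours_def)
qed

lemma card_switchable_arcs:
  assumes M: "M \<in> pms_with_edge"
  shows "degree V E a + degree V E b \<le> card (switchable_arcs M) + card V"
proof -
  define Ba where "Ba = {p \<in> arcs_off_edge M. fst p \<in> non_neighbours a}"
  define Bb where "Bb = {p \<in> arcs_off_edge M. snd p \<in> non_neighbours b}"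
  have fin: "finite (arcs_off_edge M)"
    using finite_arcs_off_edge[OF M] .
  have fin_K: "finite (non_neighbours v)" for v
    using finite_V by (simp add: non_neighbours_def)
  have "arcs_off_edge M \<subseteq> switchable_arcs M \<union> Ba \<union> Bb"
  proof
    fix p assume p: "p \<in> arcs_off_edge M"
    then have "fst p \<in> V - {a, b}" "snd p \<in> V - {a, b}"
      using arcs_off_edgeD[OF M] by (metis prod.collapse)+
    then show "p \<in> switchable_arcs M \<union> Ba \<union> Bb"
      using p by (auto simp: switchable_arcs_def Ba_def Bb_def non_neighbours_def)
  qed
  moreover have "switchable_arcs M \<union> Ba \<union> Bb \<subseteq> arcs_off_edge M"
    by (auto simp: switchable_arcs_def Ba_def Bb_def)
  then have "finite (switchable_arcs M \<union> Ba \<union> Bb)"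
    using fin by (rule finite_subset)
  ultimately have "card (arcs_off_edge M) \<le> card (switchable_arcs M \<union> Ba \<union> Bb)"
    by (simp add: card_mono)
  also have "\<dots> \<le> card (switchable_arcs M) + card Ba + card Bb"
    by (meson add_le_mono1 card_Un_le le_trans)
  finally have "card (arcs_off_edge M) \<le> card (switchable_arcs M) + card Ba + card Bb" .
  moreover have "card Ba \<le> card (non_neighbours a)"
  proof (rule card_inj_on_le[OF _ _ fin_K])
    show "inj_on fst Ba"
      using inj_on_fst_arcs_off_edge[OF M] by (rule inj_on_subset) (simp add: Ba_def)
    show "fst ` Ba \<subseteq> non_neighbours a"
      by (auto simp: Ba_def)
  qed
  moreover have "card Bb \<le> card (non_neighbours b)"
  proof (rule card_inj_on_le[OF _ _ fin_K])
    show "inj_on snd Bb"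
      using inj_on_snd_arcs_off_edge[OF M] by (rule inj_on_subset) (simp add: Bb_def)
    show "snd ` Bb \<subseteq> non_neighbours b"
      by (auto simp: Bb_def)
  qed
  ultimately show ?thesis
    using card_arcs_off_edge[OF M] card_non_neighbours by linarith
qed

lemma switch_in_pms_without_edge:
  assumes M: "M \<in> pms_with_edge" and xy: "(x, y) \<in> switchable_arcs M"
  shows "switch a b M (x, y) \<in> perfect_matchings V E - pms_with_edge"
proof -
  have arc: "(x, y) \<in> arcs_off_edge M" and E_ax_by: "{a, x} \<in> E" "{b, y} \<in> E"
    using xy by (auto simp: switchable_arcs_def)
  note xy_facts = arcs_off_edgeD[OF M arc]
  have "{a, b} \<noteq> {x, y}"
    using xy_facts(1) by auto
  then have "perfect_matching V E (switch a b M (x, y))"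
    using perfect_matching_switch[OF simple pms_with_edgeD[OF M] xy_facts(3) _ E_ax_by] by blast
  moreover have "{a, b} \<notin> switch a b M (x, y)"
    using xy_facts(1,2) a_neq_b by (auto simp: switch_def doubleton_eq_iff)
  ultimately show ?thesis
    by (simp add: perfect_matchings_def pms_with_edge_def)
qed

lemma switch_inverse:
  assumes M: "M \<in> pms_with_edge" and xy: "(x, y) \<in> switchable_arcs M"
  shows "M = insert {a, b} (insert {x, y} (switch a b M (x, y) - {{a, x}, {b, y}}))"
proof -
  have arc: "(x, y) \<in> arcs_off_edge M"
    using xy by (simp add: switchable_arcs_def)
  note xy_facts = arcs_off_edgeD[OF M arc]
  note partner_unique = perfect_matching_partner_unique[OF simple pms_with_edgeD(1)[OF M]]
  have "{a, x} \<notin> M"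
    using partner_unique[of a b x] pms_with_edgeD(2)[OF M] xy_facts(1) by auto
  moreover have "{b, y} \<notin> M"
    using partner_unique[of b a y] pms_with_edgeD(2)[OF M] xy_facts(2)
    by (auto simp: insert_commute)
  ultimately show ?thesis
    using pms_with_edgeD(2)[OF M] xy_facts(3) by (auto simp: switch_def)
qed

lemma inj_on_switch:
  "inj_on (\<lambda>(M, p). switch a b M p) (SIGMA M:pms_with_edge. switchable_arcs M)"
proof (rule inj_onI, clarsimp)
  fix M1 x1 y1 M2 x2 y2
  assume M1: "M1 \<in> pms_with_edge" "(x1, y1) \<in> switchable_arcs M1"
    and M2: "M2 \<in> pms_with_edge" "(x2, y2) \<in> switchable_arcs M2"
    and eq: "switch a b M1 (x1, y1) = switch a b M2 (x2, y2)"
  define M' where "M' = switch a b M1 (x1, y1)"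
  have "perfect_matching V E M'"
    using switch_in_pms_without_edge[OF M1] by (simp add: M'_def perfect_matchings_def)
  note partner_unique = perfect_matching_partner_unique[OF simple this]
  have "{a, x1} \<in> M'" "{b, y1} \<in> M'"
    by (simp_all add: M'_def switch_def)
  moreover have "{a, x2} \<in> M'" "{b, y2} \<in> M'"
    unfolding M'_def eq by (simp_all add: switch_def)
  ultimately have "x1 = x2" "y1 = y2"
    using partner_unique by blast+
  then show "M1 = M2 \<and> x1 = x2 \<and> y1 = y2"
    using switch_inverse[OF M1] switch_inverse[OF M2] eq by metis
qed

lemma card_pms_with_edge_le:
  "card pms_with_edge * (degree V E a + degree V E b + 1 - card V)
     \<le> card (perfect_matchings V E)"
proof -
  let ?S = "SIGMA M:pms_with_edge. switchable_arcs M"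
  have fin_PM: "finite (perfect_matchings V E)"
    using finite_perfect_matchings[OF simple] .
  have fin_A: "finite pms_with_edge"
    using fin_PM by (simp add: pms_with_edge_def)
  have A_sub: "pms_with_edge \<subseteq> perfect_matchings V E"
    by (auto simp: pms_with_edge_def)
  have fin_switchable: "finite (switchable_arcs M)" if "M \<in> pms_with_edge" for M
    by (rule finite_subset[OF _ finite_arcs_off_edge[OF that]]) (auto simp: switchable_arcs_def)
  have "degree V E a + degree V E b + 1 - card V \<le> card (switchable_arcs M) + 1"
    if "M \<in> pms_with_edge" for M
    using card_switchable_arcs[OF that] by linarith
  then have "card pms_with_edge * (degree V E a + degree V E b + 1 - card V)
      \<le> (\<Sum>M\<in>pms_with_edge. card (switchable_arcs M) + 1)"
    using sum_bounded_below[of pms_with_edge _ "\<lambda>M. card (switchable_arcs M) + 1"] by simp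
  also have "\<dots> = card ?S + card pms_with_edge"
    using fin_A fin_switchable by (simp add: sum_Suc)
  also have "card ?S = card ((\<lambda>(M, p). switch a b M p) ` ?S)"
    using inj_on_switch by (simp add: card_image)
  also have "\<dots> \<le> card (perfect_matchings V E - pms_with_edge)"
    using switch_in_pms_without_edge fin_PM by (intro card_mono) auto
  also have "\<dots> + card pms_with_edge = card (perfect_matchings V E)"
    using card_mono[OF fin_PM A_sub] by (simp add: card_Diff_subset[OF fin_A A_sub])
  finally show ?thesis
    by simp
qed

end

lemma prob_edge_in_pm_le:
  assumes G: "simple_graph V E" and ab: "{a, b} \<in> E" and "0 < d"
    and d: "d \<le> real (degree V E a) + real (degree V E b) + 1 - real (card V)"
  shows "prob_edge_in_pm V E {a, b} \<le> 1 / d"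
proof -
  interpret graph_with_edge V E a b
    using G ab by unfold_locales
  define k where "k = degree V E a + degree V E b + 1 - card V"
  have "d \<le> real k"
    using d \<open>0 < d\<close> by (simp add: k_def)
  have "real (card pms_with_edge) * d \<le> real (card (perfect_matchings V E))"
  proof -
    have "real (card pms_with_edge) * d \<le> real (card pms_with_edge) * real k"
      using \<open>d \<le> real k\<close> by (simp add: mult_left_mono)
    also have "\<dots> \<le> real (card (perfect_matchings V E))"
      using card_pms_with_edge_le unfolding k_def of_nat_mult[symmetric] of_nat_le_iff .
    finally show ?thesis .
  qed
  then show ?thesis
    using \<open>0 < d\<close>
    by (simp add: prob_edge_in_pm_def pms_with_edge_def divide_simps mult.commute)
qed

theorem mainTheorem14:
  shows "\<exists>N::nat. \<forall>(V::nat set) (E::nat set set) (e::nat set) (n::nat).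
     simple_graph V E \<longrightarrow> card V = n \<longrightarrow> even n \<longrightarrow> n \<ge> N \<longrightarrow>
     (\<forall>v\<in>V. real (degree V E v) \<ge> real n - sqrt (real n) / 4000) \<longrightarrow>
     e \<in> E \<longrightarrow>
     prob_edge_in_pm V E e \<le> 1 / (real n - sqrt (real n) / 1000)"
proof (intro exI[of _ 0] allI impI)
  fix V :: "nat set" and E e and n :: nat
  assume G: "simple_graph V E" and n: "card V = n"
    and deg: "\<forall>v\<in>V. real (degree V E v) \<ge> real n - sqrt (real n) / 4000" and "e \<in> E"
  then obtain a b where ab: "e = {a, b}" "{a, b} \<in> E"
    by (auto simp: simple_graph_def)
  interpret graph_with_edge V E a b
    using G ab by unfold_locales
  have sqrt_ge_1: "1 \<le> sqrt (real n)"
    using two_le_card_V n by simp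
  then have "sqrt (real n) * 1 \<le> sqrt (real n) * sqrt (real n)"
    by (intro mult_left_mono) auto
  then have "sqrt (real n) / 1000 < real n"
    using two_le_card_V n by simp
  moreover have "real n - sqrt (real n) / 1000
      \<le> real (degree V E a) + real (degree V E b) + 1 - real (card V)"
    using deg[rule_format, OF a_in_V] deg[rule_format, OF b_in_V] n sqrt_ge_1 by linarith
  ultimately show "prob_edge_in_pm V E e \<le> 1 / (real n - sqrt (real n) / 1000)"
    unfolding ab(1) using prob_edge_in_pm_le[OF G ab(2)] by simp
qed
end
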